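(* Let $b_r\ge0$ and $b=b_r\vee b^*$. Then $(\mu-\alpha G(x))\mathbf 1_{\{x>b\}}\le0$ for all $x\ge0$, and if $b_r>b^*$ then $\lim_{x\nearrow b}G''(x)>0$. Likewise, with $b=b_r\vee b^{**}$: $(\mu-\alpha H(x))\mathbf 1_{\{x>b\}}\le0$ for all $x\ge0$, and if $b_r>b^{**}$ then $\lim_{x\nearrow b}H''(x)>0$.
   Context: Fix parameters $\mu>0$, $\sigma>0$, $\alpha>0$ and $k>1$. Set $r_1:=-\frac{\mu}{\sigma^2}+\sqrt{\frac{\mu^2}{\sigma^4}+\frac{2\alpha}{\sigma^2}}$ and $r_2:=-\frac{\mu}{\sigma^2}-\sqrt{\frac{\mu^2}{\sigma^4}+\frac{2\alpha}{\sigma^2}}$ (so $r_2<0<r_1$ and $r_2^2>r_1^2$). Let $b^*:=\frac{\log(r_2^2/r_1^2)}{r_1-r_2}>0$ and let $b^{**}>0$ be the unique positive solution of $r_1e^{-r_2b}-r_2e^{-r_1b}=k(r_1-r_2)$. Write $G(x)=G(x;b_r)$ and $H(x)=H(x;b_r)$, where: with $b=b_r\vee b^*$, $G(x;b_r):=\frac{e^{r_1x}-e^{r_2x}}{r_1e^{r_1b}-r_2e^{r_2b}}$ for $0\le x\le b$ and $G(x;b_r):=x-b+\frac{e^{r_1b}-e^{r_2b}}{r_1e^{r_1b}-r_2e^{r_2b}}$ for $x>b$; with $b=b_r\vee b^{**}$, $H(x;b_r):=\frac{1}{e^{r_1b}-e^{r_2b}}\Big(\frac{1-ke^{r_2b}}{r_1}e^{r_1x}-\frac{1-ke^{r_1b}}{r_2}e^{r_2x}\Big)$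 for $0\le x\le b$ and $H(x;b_r):=x-b+\frac{1}{e^{r_1b}-e^{r_2b}}\Big(\frac{1-ke^{r_2b}}{r_1}e^{r_1b}-\frac{1-ke^{r_1b}}{r_2}e^{r_2b}\Big)$ for $x>b$. *)

theory Defs
  imports "HOL-Analysis.Analysis"
begin

definition r1 :: "real \<Rightarrow> real \<Rightarrow> real \<Rightarrow> real" where
  "r1 \<mu> \<sigma> \<alpha> = - \<mu> / \<sigma>\<^sup>2 + sqrt (\<mu>\<^sup>2 / \<sigma>^4 + 2 * \<alpha> / \<sigma>\<^sup>2)"

definition r2 :: "real \<Rightarrow> real \<Rightarrow> real \<Rightarrow> real" where
  "r2 \<mu> \<sigma> \<alpha> = - \<mu> / \<sigma>\<^sup>2 - sqrt (\<mu>\<^sup>2 / \<sigma>^4 + 2 * \<alpha> / \<sigma>\<^sup>2)"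

definition bstar :: "real \<Rightarrow> real \<Rightarrow> real \<Rightarrow> real" where
  "bstar \<mu> \<sigma> \<alpha> =
     ln ((r2 \<mu> \<sigma> \<alpha>)\<^sup>2 / (r1 \<mu> \<sigma> \<alpha>)\<^sup>2) / (r1 \<mu> \<sigma> \<alpha> - r2 \<mu> \<sigma> \<alpha>)"

definition bstarstar :: "real \<Rightarrow> real \<Rightarrow> real \<Rightarrow> real \<Rightarrow> real" where
  "bstarstar \<mu> \<sigma> \<alpha> k = (THE b. b > 0 \<and>
     r1 \<mu> \<sigma> \<alpha> * exp (- r2 \<mu> \<sigma> \<alpha> * b) - r2 \<mu> \<sigma> \<alpha> * exp (- r1 \<mu> \<sigma> \<alpha> * b)
       = k * (r1 \<mu> \<sigma> \<alpha> - r2 \<mu> \<sigma> \<alpha>))"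

definition Gfun :: "real \<Rightarrow> real \<Rightarrow> real \<Rightarrow> real \<Rightarrow> real \<Rightarrow> real" where
  "Gfun \<mu> \<sigma> \<alpha> br x =
    (let p = r1 \<mu> \<sigma> \<alpha>; q = r2 \<mu> \<sigma> \<alpha>; b = max br (bstar \<mu> \<sigma> \<alpha>) in
     if x \<le> b then (exp (p * x) - exp (q * x)) / (p * exp (p * b) - q * exp (q * b))
     else x - b + (exp (p * b) - exp (q * b)) / (p * exp (p * b) - q * exp (q * b)))"

definition Hfun :: "real \<Rightarrow> real \<Rightarrow> real \<Rightarrow> real \<Rightarrow> real \<Rightarrow> real \<Rightarrow> real" where
  "Hfun \<mu> \<sigma> \<alpha> k br x =
    (let p = r1 \<mu> \<sigma> \<alpha>; q = r2 \<mu> \<sigma> \<alpha>; b = max br (bstarstar \<mu> \<sigma> \<alpha> k) in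
     if x \<le> b then (1 / (exp (p * b) - exp (q * b))) *
          ((1 - k * exp (q * b)) / p * exp (p * x) - (1 - k * exp (p * b)) / q * exp (q * x))
     else x - b + (1 / (exp (p * b) - exp (q * b))) *
          ((1 - k * exp (q * b)) / p * exp (p * b) - (1 - k * exp (p * b)) / q * exp (q * b)))"

end

theory Submission
  imports Defs
begin

(*
  Both G and H are of the form A e^(p x) + B e^(q x) up to the threshold b and continue linearly
  with slope 1 beyond it, where p, q are the roots of the characteristic equation
  \<sigma>^2/2 r^2 + \<mu> r = \<alpha>. Such a combination f solves \<alpha> f = \<sigma>^2/2 f'' + \<mu> f', so when
  f'(b) = 1 (smooth fit) we get \<alpha> f(b) - \<mu> = \<sigma>^2/2 f''(b-), and for x > b the value
  \<mu> - \<alpha> f(x) lies below \<mu> - \<alpha> f(b). Everything thus reduces to the sign of f''(b-), which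
  is that of p^2 e^(p b) - q^2 e^(q b) for G and of r1 e^(-r2 b) - r2 e^(-r1 b) - k (r1 - r2)
  for H; the first changes sign at b*, the second is increasing in b and vanishes at b**.
*)

lemma char_eq_shifted_root:
  fixes \<mu> \<sigma> \<alpha> r :: real
  assumes "\<sigma> > 0" and "(r + \<mu>/\<sigma>\<^sup>2)\<^sup>2 = \<mu>\<^sup>2/\<sigma>^4 + 2*\<alpha>/\<sigma>\<^sup>2"
  shows "\<sigma>\<^sup>2/2 * r\<^sup>2 + \<mu> * r = \<alpha>"
proof -
  have "\<sigma>\<^sup>2 * (r + \<mu>/\<sigma>\<^sup>2)\<^sup>2 = \<sigma>\<^sup>2 * r\<^sup>2 + 2*\<mu>*r + \<mu>\<^sup>2/\<sigma>\<^sup>2"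
    using assms(1) by (simp add: power2_eq_square field_simps)
  moreover have "\<sigma>\<^sup>2 * (\<mu>\<^sup>2/\<sigma>^4 + 2*\<alpha>/\<sigma>\<^sup>2) = \<mu>\<^sup>2/\<sigma>\<^sup>2 + 2*\<alpha>"
    using assms(1) by (simp add: power2_eq_square power4_eq_xxxx field_simps)
  ultimately show ?thesis using assms(2) by (simp add: field_simps)
qed

lemma r1_r2_char_eq:
  fixes \<mu> \<sigma> \<alpha> :: real
  assumes "\<sigma> > 0" and "\<alpha> \<ge> 0"
  shows "\<sigma>\<^sup>2/2 * (r1 \<mu> \<sigma> \<alpha>)\<^sup>2 + \<mu> * r1 \<mu> \<sigma> \<alpha> = \<alpha>"
    and "\<sigma>\<^sup>2/2 * (r2 \<mu> \<sigma> \<alpha>)\<^sup>2 + \<mu> * r2 \<mu> \<sigma> \<alpha> = \<alpha>"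
proof -
  have sq: "(sqrt (\<mu>\<^sup>2/\<sigma>^4 + 2*\<alpha>/\<sigma>\<^sup>2))\<^sup>2 = \<mu>\<^sup>2/\<sigma>^4 + 2*\<alpha>/\<sigma>\<^sup>2"
    using assms by simp
  show "\<sigma>\<^sup>2/2 * (r1 \<mu> \<sigma> \<alpha>)\<^sup>2 + \<mu> * r1 \<mu> \<sigma> \<alpha> = \<alpha>"
    by (rule char_eq_shifted_root[OF assms(1)]) (simp add: r1_def sq)
  show "\<sigma>\<^sup>2/2 * (r2 \<mu> \<sigma> \<alpha>)\<^sup>2 + \<mu> * r2 \<mu> \<sigma> \<alpha> = \<alpha>"
    by (rule char_eq_shifted_root[OF assms(1)]) (simp add: r2_def sq)
qed

lemma r2_neg_r1_pos:
  fixes \<mu> \<sigma> \<alpha> :: real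
  assumes "\<sigma> > 0" and "\<alpha> > 0"
  shows "r2 \<mu> \<sigma> \<alpha> < 0" and "0 < r1 \<mu> \<sigma> \<alpha>"
proof -
  have "\<mu>\<^sup>2/\<sigma>^4 = (\<mu>/\<sigma>\<^sup>2)\<^sup>2"
    by (simp add: power_divide flip: power_mult)
  then have "\<bar>\<mu>/\<sigma>\<^sup>2\<bar> < sqrt (\<mu>\<^sup>2/\<sigma>^4 + 2*\<alpha>/\<sigma>\<^sup>2)"
    using assms by (metis real_sqrt_abs real_sqrt_less_mono less_add_same_cancel1
        divide_pos_pos zero_less_power mult_pos_pos zero_less_numeral)
  then show "r2 \<mu> \<sigma> \<alpha> < 0" and "0 < r1 \<mu> \<sigma> \<alpha>"
    unfolding r1_def r2_def by linarith+
qed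

lemma char_root_combination:
  fixes \<alpha> \<mu> \<sigma> p q A B X Y :: real
  assumes "\<sigma>\<^sup>2/2 * p\<^sup>2 + \<mu> * p = \<alpha>" and "\<sigma>\<^sup>2/2 * q\<^sup>2 + \<mu> * q = \<alpha>"
  shows "\<alpha> * (A*X + B*Y) = \<sigma>\<^sup>2/2 * (A*p\<^sup>2*X + B*q\<^sup>2*Y) + \<mu> * (A*p*X + B*q*Y)"
proof -
  have "\<alpha> * (A*X + B*Y) = A*X*(\<sigma>\<^sup>2/2 * p\<^sup>2 + \<mu> * p) + B*Y*(\<sigma>\<^sup>2/2 * q\<^sup>2 + \<mu> * q)"
    unfolding assms by (simp add: algebra_simps)
  then show ?thesis by (simp add: algebra_simps)
qed

lemma deriv_exp_pair_at_left:
  fixes F :: "real \<Rightarrow> real"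
  assumes "\<forall>y<b. F y = A * exp (p*y) + B * exp (q*y)" and "x < b"
  shows "deriv F x = A*p * exp (p*x) + B*q * exp (q*x)"
proof -
  have "((\<lambda>y. A * exp (p*y) + B * exp (q*y)) has_field_derivative A*p * exp (p*x) + B*q * exp (q*x)) (at x)"
    by (auto intro!: derivative_eq_intros)
  then have "(F has_field_derivative A*p * exp (p*x) + B*q * exp (q*x)) (at x)"
    by (rule has_field_derivative_transform_within_open[where S = "{..<b}"]) (use assms in auto)
  then show ?thesis by (rule DERIV_imp_deriv)
qed

lemma deriv_deriv_exp_pair_tendsto_at_left:
  fixes F :: "real \<Rightarrow> real"
  assumes "\<forall>y<b. F y = A * exp (p*y) + B * exp (q*y)"
  shows "((\<lambda>x. deriv (deriv F) x) \<longlongrightarrow> A*p\<^sup>2 * exp (p*b) + B*q\<^sup>2 * exp (q*b)) (at_left b)"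
proof -
  have "\<forall>y<b. deriv F y = (A*p) * exp (p*y) + (B*q) * exp (q*y)"
    using deriv_exp_pair_at_left[OF assms] by auto
  then have "deriv (deriv F) x = (A*p)*p * exp (p*x) + (B*q)*q * exp (q*x)" if "x < b" for x
    using that by (rule deriv_exp_pair_at_left)
  then have "\<forall>x<b. deriv (deriv F) x = A*p\<^sup>2 * exp (p*x) + B*q\<^sup>2 * exp (q*x)"
    by (simp add: power2_eq_square mult.assoc)
  moreover have "eventually (\<lambda>x. x < b) (at_left b)"
    by (simp add: eventually_at_filter)
  ultimately have "eventually (\<lambda>x. A*p\<^sup>2 * exp (p*x) + B*q\<^sup>2 * exp (q*x) = deriv (deriv F) x) (at_left b)"
    by (auto elim: eventually_mono)
  moreover have "((\<lambda>x. A*p\<^sup>2 * exp (p*x) + B*q\<^sup>2 * exp (q*x))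
      \<longlongrightarrow> A*p\<^sup>2 * exp (p*b) + B*q\<^sup>2 * exp (q*b)) (at_left b)"
    by (auto intro!: tendsto_eq_intros)
  ultimately show ?thesis by (rule Lim_transform_eventually[rotated])
qed

definition pasted_exp :: "real \<Rightarrow> real \<Rightarrow> real \<Rightarrow> real \<Rightarrow> real \<Rightarrow> real \<Rightarrow> real" where
  "pasted_exp A B p q b x =
     (if x \<le> b then A * exp (p*x) + B * exp (q*x) else x - b + (A * exp (p*b) + B * exp (q*b)))"

lemma deriv_deriv_pasted_exp_tendsto:
  "((\<lambda>x. deriv (deriv (pasted_exp A B p q b)) x) \<longlongrightarrow> A*p\<^sup>2 * exp (p*b) + B*q\<^sup>2 * exp (q*b))
     (at_left b)"
  by (rule deriv_deriv_exp_pair_tendsto_at_left) (simp add: pasted_exp_def)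

lemma pasted_exp_generator_nonpos:
  fixes \<alpha> \<mu> \<sigma> p q A B b x :: real
  assumes "\<sigma>\<^sup>2/2 * p\<^sup>2 + \<mu> * p = \<alpha>" and "\<sigma>\<^sup>2/2 * q\<^sup>2 + \<mu> * q = \<alpha>" and "\<alpha> \<ge> 0"
    and smooth_fit: "A*p * exp (p*b) + B*q * exp (q*b) = 1"
    and curvature: "A*p\<^sup>2 * exp (p*b) + B*q\<^sup>2 * exp (q*b) \<ge> 0"
    and "x > b"
  shows "\<mu> - \<alpha> * pasted_exp A B p q b x \<le> 0"
proof -
  have "\<alpha> * (A * exp (p*b) + B * exp (q*b)) = \<sigma>\<^sup>2/2 * (A*p\<^sup>2 * exp (p*b) + B*q\<^sup>2 * exp (q*b)) + \<mu>"
    using char_root_combination[OF assms(1,2)] smooth_fit by simp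
  moreover have "\<alpha> * (x - b) \<ge> 0" and "\<sigma>\<^sup>2/2 * (A*p\<^sup>2 * exp (p*b) + B*q\<^sup>2 * exp (q*b)) \<ge> 0"
    using assms(3,6) curvature by simp_all
  ultimately show ?thesis
    using \<open>x > b\<close> by (simp add: pasted_exp_def algebra_simps)
qed

lemma sq_mult_exp_eq_exp:
  fixes q b :: real
  assumes "q \<noteq> 0"
  shows "q\<^sup>2 * exp (q*b) = exp (ln (q\<^sup>2) + q*b)"
  using assms by (simp add: exp_add)

lemma sq_mult_exp_le_iff:
  fixes p q b :: real
  assumes "p \<noteq> 0" and "q \<noteq> 0" and "q < p"
  shows "q\<^sup>2 * exp (q*b) \<le> p\<^sup>2 * exp (p*b) \<longleftrightarrow> ln (q\<^sup>2/p\<^sup>2) / (p-q) \<le> b"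
  unfolding sq_mult_exp_eq_exp[OF assms(1)] sq_mult_exp_eq_exp[OF assms(2)]
  using assms by (simp add: ln_div pos_divide_le_eq algebra_simps)

lemma sq_mult_exp_less_iff:
  fixes p q b :: real
  assumes "p \<noteq> 0" and "q \<noteq> 0" and "q < p"
  shows "q\<^sup>2 * exp (q*b) < p\<^sup>2 * exp (p*b) \<longleftrightarrow> ln (q\<^sup>2/p\<^sup>2) / (p-q) < b"
  unfolding sq_mult_exp_eq_exp[OF assms(1)] sq_mult_exp_eq_exp[OF assms(2)]
  using assms by (simp add: ln_div pos_divide_less_eq algebra_simps)

lemma exp_gap_strict_mono:
  fixes p q x y :: real
  assumes "q < 0" and "0 < p" and "0 \<le> x" and "x < y"
  shows "p * exp (-q*x) - q * exp (-p*x) < p * exp (-q*y) - q * exp (-p*y)"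
proof (rule DERIV_pos_imp_increasing_open[OF assms(4)])
  fix t assume "x < t" "t < y"
  then have "exp (-p*t) < exp (-q*t)" and "0 < -q*p"
    using assms by (simp_all add: mult_strict_right_mono mult_neg_pos)
  then have "0 < (-q*p) * (exp (-q*t) - exp (-p*t))" by (simp only: mult_pos_pos diff_gt_0_iff_gt)
  moreover have "((\<lambda>b. p * exp (-q*b) - q * exp (-p*b)) has_real_derivative
      (-q*p) * (exp (-q*t) - exp (-p*t))) (at t)"
    by (auto intro!: derivative_eq_intros simp: algebra_simps)
  ultimately show "\<exists>d. ((\<lambda>b. p * exp (-q*b) - q * exp (-p*b)) has_real_derivative d) (at t) \<and> 0 < d"
    by blast
qed (auto intro!: continuous_intros)

lemma ex1_exp_gap_root:
  fixes p q k :: real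
  assumes "q < 0" and "0 < p" and "k > 1"
  shows "\<exists>!b. b > 0 \<and> p * exp (-q*b) - q * exp (-p*b) = k * (p-q)"
proof -
  define \<phi> where "\<phi> b = p * exp (-q*b) - q * exp (-p*b)" for b
  define B where "B = k * (p-q) / (-p*q)"
  have "-p*q > 0" using assms by (simp add: mult_pos_neg)
  then have "B > 0" using assms unfolding B_def by (intro divide_pos_pos) simp_all
  have "\<phi> 0 \<le> k * (p-q)" using assms by (simp add: \<phi>_def)
  moreover have "k * (p-q) \<le> \<phi> B"
  proof -
    have "p * (1 - q*B) \<le> p * exp (-q*B)"
      using exp_ge_add_one_self[of "-q*B"] assms by (simp add: mult_left_mono)
    moreover have "k * (p-q) = -p*q*B" using assms by (simp add: B_def)
    moreover have "0 < -q * exp (-p*B)" using assms by (simp add: mult_neg_pos)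
    ultimately show ?thesis using assms by (simp add: \<phi>_def algebra_simps)
  qed
  moreover have "continuous_on {0..B} \<phi>" by (auto simp: \<phi>_def intro!: continuous_intros)
  ultimately obtain b where "0 \<le> b" "b \<le> B" "\<phi> b = k * (p-q)"
    using IVT'[of \<phi> 0 "k * (p-q)" B] \<open>B > 0\<close> by auto
  moreover have "\<phi> 0 \<noteq> k * (p-q)" using assms by (simp add: \<phi>_def)
  ultimately have root: "b > 0 \<and> \<phi> b = k * (p-q)" by (metis order_le_less)
  have "c = b" if "c > 0 \<and> \<phi> c = k * (p-q)" for c
    using root that exp_gap_strict_mono[OF assms(1,2), of b c] exp_gap_strict_mono[OF assms(1,2), of c b]
    by (cases c b rule: linorder_cases) (auto simp: \<phi>_def)
  with root show ?thesis unfolding \<phi>_def by blast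
qed

lemma bstarstar_root:
  fixes \<mu> \<sigma> \<alpha> k :: real
  assumes "\<sigma> > 0" and "\<alpha> > 0" and "k > 1"
  shows "bstarstar \<mu> \<sigma> \<alpha> k > 0"
    and "r1 \<mu> \<sigma> \<alpha> * exp (- r2 \<mu> \<sigma> \<alpha> * bstarstar \<mu> \<sigma> \<alpha> k)
           - r2 \<mu> \<sigma> \<alpha> * exp (- r1 \<mu> \<sigma> \<alpha> * bstarstar \<mu> \<sigma> \<alpha> k)
         = k * (r1 \<mu> \<sigma> \<alpha> - r2 \<mu> \<sigma> \<alpha>)"
  using theI'[OF ex1_exp_gap_root[OF r2_neg_r1_pos[OF assms(1,2)] assms(3)]]
  unfolding bstarstar_def by simp_all

lemma exp_pair_fit_curvature:
  fixes p q k c A B W :: real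
  assumes "p \<noteq> 0" and "q \<noteq> 0" and "W \<noteq> 0"
    and W: "W = exp (p*c) - exp (q*c)"
    and A: "A = (1 - k * exp (q*c)) / (p*W)"
    and B: "B = - ((1 - k * exp (p*c)) / (q*W))"
  shows "A*p * exp (p*c) + B*q * exp (q*c) = 1"
    and "A*p\<^sup>2 * exp (p*c) + B*q\<^sup>2 * exp (q*c)
         = exp (p*c) * exp (q*c) * (p * exp (-q*c) - q * exp (-p*c) - k * (p-q)) / W"
proof -
  have "A*p * exp (p*c) + B*q * exp (q*c)
      = ((1 - k * exp (q*c)) * exp (p*c) - (1 - k * exp (p*c)) * exp (q*c)) / W"
    using assms(1-3) by (simp add: A B field_simps)
  also have "(1 - k * exp (q*c)) * exp (p*c) - (1 - k * exp (p*c)) * exp (q*c) = W"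
    by (simp add: W algebra_simps)
  finally show "A*p * exp (p*c) + B*q * exp (q*c) = 1"
    using \<open>W \<noteq> 0\<close> by simp
  have "A*p\<^sup>2 * exp (p*c) + B*q\<^sup>2 * exp (q*c)
      = (p * (1 - k * exp (q*c)) * exp (p*c) - q * (1 - k * exp (p*c)) * exp (q*c)) / W"
    using assms(1-3) by (simp add: A B power2_eq_square field_simps)
  also have "p * (1 - k * exp (q*c)) * exp (p*c) - q * (1 - k * exp (p*c)) * exp (q*c)
      = exp (p*c) * exp (q*c) * (p * exp (-q*c) - q * exp (-p*c) - k * (p-q))"
    by (simp add: exp_minus field_simps)
  finally show "A*p\<^sup>2 * exp (p*c) + B*q\<^sup>2 * exp (q*c)
      = exp (p*c) * exp (q*c) * (p * exp (-q*c) - q * exp (-p*c) - k * (p-q)) / W" .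
qed

lemma Gfun_verification:
  fixes \<mu> \<sigma> \<alpha> br :: real
  assumes "\<sigma> > 0" and "\<alpha> > 0"
  shows "\<forall>x > max br (bstar \<mu> \<sigma> \<alpha>). \<mu> - \<alpha> * Gfun \<mu> \<sigma> \<alpha> br x \<le> 0"
    and "br > bstar \<mu> \<sigma> \<alpha> \<Longrightarrow> \<exists>L>0. ((\<lambda>x. deriv (deriv (Gfun \<mu> \<sigma> \<alpha> br)) x) \<longlongrightarrow> L)
           (at_left (max br (bstar \<mu> \<sigma> \<alpha>)))"
proof -
  define p q b where "p = r1 \<mu> \<sigma> \<alpha>" and "q = r2 \<mu> \<sigma> \<alpha>" and "b = max br (bstar \<mu> \<sigma> \<alpha>)"
  define D where "D = p * exp (p*b) - q * exp (q*b)"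
  have "q < 0" "0 < p" using r2_neg_r1_pos[OF assms] by (simp_all add: p_def q_def)
  have char: "\<sigma>\<^sup>2/2 * p\<^sup>2 + \<mu> * p = \<alpha>" "\<sigma>\<^sup>2/2 * q\<^sup>2 + \<mu> * q = \<alpha>"
    using r1_r2_char_eq assms by (simp_all add: p_def q_def)
  have "0 < p * exp (p*b)" and "q * exp (q*b) < 0"
    using \<open>q < 0\<close> \<open>0 < p\<close> by (simp_all add: mult_neg_pos)
  then have "D > 0" unfolding D_def by linarith
  have G: "Gfun \<mu> \<sigma> \<alpha> br = pasted_exp (1/D) (-1/D) p q b"
    by (simp add: fun_eq_iff Gfun_def pasted_exp_def Let_def p_def q_def b_def D_def diff_divide_distrib)
  have "1/D * p * exp (p*b) + -1/D * q * exp (q*b) = (p * exp (p*b) - q * exp (q*b)) / D"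
    by (simp add: diff_divide_distrib)
  then have fit: "1/D * p * exp (p*b) + -1/D * q * exp (q*b) = 1"
    using \<open>D > 0\<close> by (simp add: D_def)
  have curvature:
    "1/D * p\<^sup>2 * exp (p*b) + -1/D * q\<^sup>2 * exp (q*b) = (p\<^sup>2 * exp (p*b) - q\<^sup>2 * exp (q*b)) / D"
    by (simp add: diff_divide_distrib)
  have bstar: "bstar \<mu> \<sigma> \<alpha> = ln (q\<^sup>2/p\<^sup>2) / (p-q)" by (simp add: bstar_def p_def q_def)
  have "q\<^sup>2 * exp (q*b) \<le> p\<^sup>2 * exp (p*b)"
    using sq_mult_exp_le_iff[of p q b] \<open>q < 0\<close> \<open>0 < p\<close> by (simp add: b_def flip: bstar)
  then show "\<forall>x > max br (bstar \<mu> \<sigma> \<alpha>). \<mu> - \<alpha> * Gfun \<mu> \<sigma> \<alpha> br x \<le> 0"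
    unfolding G b_def[symmetric]
    using pasted_exp_generator_nonpos[OF char _ fit] assms \<open>D > 0\<close> by (simp add: curvature divide_le_cancel)
  assume "br > bstar \<mu> \<sigma> \<alpha>"
  then have "q\<^sup>2 * exp (q*b) < p\<^sup>2 * exp (p*b)"
    using sq_mult_exp_less_iff[of p q b] \<open>q < 0\<close> \<open>0 < p\<close> by (simp add: b_def flip: bstar)
  then show "\<exists>L>0. ((\<lambda>x. deriv (deriv (Gfun \<mu> \<sigma> \<alpha> br)) x) \<longlongrightarrow> L) (at_left (max br (bstar \<mu> \<sigma> \<alpha>)))"
    using deriv_deriv_pasted_exp_tendsto[of "1/D" "-1/D" p q b] \<open>D > 0\<close>
    unfolding G curvature b_def[symmetric] by (meson divide_pos_pos diff_gt_0_iff_gt)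
qed

lemma Hfun_verification:
  fixes \<mu> \<sigma> \<alpha> k br :: real
  assumes "\<sigma> > 0" and "\<alpha> > 0" and "k > 1"
  shows "\<forall>x > max br (bstarstar \<mu> \<sigma> \<alpha> k). \<mu> - \<alpha> * Hfun \<mu> \<sigma> \<alpha> k br x \<le> 0"
    and "br > bstarstar \<mu> \<sigma> \<alpha> k \<Longrightarrow> \<exists>L>0. ((\<lambda>x. deriv (deriv (Hfun \<mu> \<sigma> \<alpha> k br)) x) \<longlongrightarrow> L)
           (at_left (max br (bstarstar \<mu> \<sigma> \<alpha> k)))"
proof -
  define p q c where "p = r1 \<mu> \<sigma> \<alpha>" and "q = r2 \<mu> \<sigma> \<alpha>" and "c = max br (bstarstar \<mu> \<sigma> \<alpha> k)"
  define W where "W = exp (p*c) - exp (q*c)"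
  define A where "A = (1 - k * exp (q*c)) / (p*W)"
  define B where "B = - ((1 - k * exp (p*c)) / (q*W))"
  define gap where "gap = p * exp (-q*c) - q * exp (-p*c) - k * (p-q)"
  have "q < 0" "0 < p" using r2_neg_r1_pos[OF assms(1,2)] by (simp_all add: p_def q_def)
  have char: "\<sigma>\<^sup>2/2 * p\<^sup>2 + \<mu> * p = \<alpha>" "\<sigma>\<^sup>2/2 * q\<^sup>2 + \<mu> * q = \<alpha>"
    using r1_r2_char_eq assms by (simp_all add: p_def q_def)
  have root: "bstarstar \<mu> \<sigma> \<alpha> k > 0"
    "p * exp (-q * bstarstar \<mu> \<sigma> \<alpha> k) - q * exp (-p * bstarstar \<mu> \<sigma> \<alpha> k) = k * (p-q)"
    using bstarstar_root[OF assms] by (simp_all add: p_def q_def)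
  then have "c > 0" by (simp add: c_def)
  then have "W > 0" using \<open>q < 0\<close> \<open>0 < p\<close> by (simp add: W_def)
  have "1/W * ((1 - k * exp (q*c)) / p * exp (p*x) - (1 - k * exp (p*c)) / q * exp (q*x))
      = A * exp (p*x) + B * exp (q*x)" for x
    using \<open>q < 0\<close> \<open>0 < p\<close> \<open>W > 0\<close> by (simp add: A_def B_def field_simps)
  then have H: "Hfun \<mu> \<sigma> \<alpha> k br = pasted_exp A B p q c"
    unfolding Hfun_def pasted_exp_def Let_def p_def[symmetric] q_def[symmetric] c_def[symmetric]
      W_def[symmetric]
    by (simp add: fun_eq_iff)
  have fit: "A*p * exp (p*c) + B*q * exp (q*c) = 1"
    and curvature: "A*p\<^sup>2 * exp (p*c) + B*q\<^sup>2 * exp (q*c) = exp (p*c) * exp (q*c) * gap / W"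
    using exp_pair_fit_curvature[OF _ _ _ W_def A_def B_def] \<open>q < 0\<close> \<open>0 < p\<close> \<open>W > 0\<close>
    by (simp_all add: gap_def)
  have gap_pos: "gap > 0" if "bstarstar \<mu> \<sigma> \<alpha> k < c"
    using exp_gap_strict_mono[OF \<open>q < 0\<close> \<open>0 < p\<close> _ that] root by (simp add: gap_def)
  have "bstarstar \<mu> \<sigma> \<alpha> k \<le> c" by (simp add: c_def)
  then have "gap \<ge> 0"
    using gap_pos root(2) by (cases "bstarstar \<mu> \<sigma> \<alpha> k < c") (auto simp: gap_def)
  then show "\<forall>x > max br (bstarstar \<mu> \<sigma> \<alpha> k). \<mu> - \<alpha> * Hfun \<mu> \<sigma> \<alpha> k br x \<le> 0"
    unfolding H c_def[symmetric]
    using pasted_exp_generator_nonpos[OF char _ fit] assms \<open>W > 0\<close> by (simp add: curvature)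
  assume "br > bstarstar \<mu> \<sigma> \<alpha> k"
  then have "gap > 0" by (intro gap_pos) (simp add: c_def)
  then show "\<exists>L>0. ((\<lambda>x. deriv (deriv (Hfun \<mu> \<sigma> \<alpha> k br)) x) \<longlongrightarrow> L)
      (at_left (max br (bstarstar \<mu> \<sigma> \<alpha> k)))"
    using deriv_deriv_pasted_exp_tendsto[of A B p q c] \<open>W > 0\<close>
    unfolding H curvature c_def[symmetric] by (meson divide_pos_pos mult_pos_pos exp_gt_zero)
qed

theorem mainTheorem9:
  fixes \<mu> \<sigma> \<alpha> k br :: real
  assumes "\<mu> > 0" and "\<sigma> > 0" and "\<alpha> > 0" and "k > 1" and "br \<ge> 0"
  shows "(\<forall>x\<ge>0. x > max br (bstar \<mu> \<sigma> \<alpha>) \<longrightarrow> \<mu> - \<alpha> * Gfun \<mu> \<sigma> \<alpha> br x \<le> 0)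
       \<and> (br > bstar \<mu> \<sigma> \<alpha> \<longrightarrow>
            (\<exists>L>0. ((\<lambda>x. deriv (deriv (Gfun \<mu> \<sigma> \<alpha> br)) x) \<longlongrightarrow> L)
                      (at_left (max br (bstar \<mu> \<sigma> \<alpha>)))))
       \<and> (\<forall>x\<ge>0. x > max br (bstarstar \<mu> \<sigma> \<alpha> k) \<longrightarrow> \<mu> - \<alpha> * Hfun \<mu> \<sigma> \<alpha> k br x \<le> 0)
       \<and> (br > bstarstar \<mu> \<sigma> \<alpha> k \<longrightarrow>
            (\<exists>L>0. ((\<lambda>x. deriv (deriv (Hfun \<mu> \<sigma> \<alpha> k br)) x) \<longlongrightarrow> L)
                      (at_left (max br (bstarstar \<mu> \<sigma> \<alpha> k)))))"
  using Gfun_verification[OF assms(2,3)] Hfun_verification[OF assms(2-4)] by blast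

end
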